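(* Let $d,s,t,\ell$ be nonnegative integers with $s\ge 1$, $d \geq 3t-5$ and $t \geq \max\{4, \ell+3\}$, and let $\theta_{t,\ell}\in\Theta_{t,\ell}$. For any three edges of $W_d(s)$, the number of subgraphs of $W_d(s)$ isomorphic to $\theta_{t,\ell}$ that contain at least two of these three edges and contain exactly one hub vertex of $W_d(s)$ is at most \[ N= \begin{cases} \max\{s(t-2),\, t-1\}, & \text{if } \mathbf{X}(\theta_{t,\ell}) \text{ is symmetric},\\ \max\{2s(t-2),\, 2(t-1)\}, & \text{if } \mathbf{X}(\theta_{t,\ell}) \text{ is asymmetric}. \end{cases} \]
   Context: For $d \ge 3$ and $s \ge 1$, the $s$-hubbed wheel $W_d(s) = \overline{K_s} + C_d$ has vertex set $\{u_1,\dots,u_s\} \cup \{v_1,\dots,v_d\}$, where $v_1v_2\cdots v_dv_1$ is a cycle, the hub vertices $u_1,\dots,u_s$ are pairwise non-adjacent, and every $u_a$ is adjacent to every $v_i$. Edges $u_av_i$ are spokes; edges $v_iv_{i+1}$ (indices mod $d$) are rim edges. For $t\ge 3$ and $0 \le \ell \le t-3$, $\Theta_{t,\ell}$ is the class of graphs $\theta_{t,\ell}$ obtained from a cycle $v_1v_2\cdots v_tv_1$ by adding exactly $\ell$ chords $v_1v_{i_1},\dots,v_1v_{i_\ell}$ with $2<i_1<\cdots<i_\ell<t$. Its vector is $\mathbf{X}(\theta_{t,\ell}) = (2, i_1, \dots, i_\ell, t)$. The graph (or its vector) is symmetric if $\ell = 0$ or $i_j + i_{\ell+1-j} = t+2$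 for every $j \le (\ell+1)/2$, and asymmetric otherwise. *)

theory Defs
  imports Main
begin

(* Simple graphs: a vertex set V and a set E of 2-element vertex subsets. *)

(* s-hubbed wheel W_d(s): hubs u_a = Inl a (1 <= a <= s), rim v_i = Inr i (1 <= i <= d) *)
definition wheel_hubs :: "nat \<Rightarrow> (nat + nat) set" where
  "wheel_hubs s = Inl ` {1..s}"

definition wheel_rim :: "nat \<Rightarrow> (nat + nat) set" where
  "wheel_rim d = Inr ` {1..d}"

definition wheel_verts :: "nat \<Rightarrow> nat \<Rightarrow> (nat + nat) set" where
  "wheel_verts d s = wheel_hubs s \<union> wheel_rim d"

definition wheel_spokes :: "nat \<Rightarrow> nat \<Rightarrow> (nat + nat) set set" where
  "wheel_spokes d s = {{Inl a, Inr i} | a i. a \<in> {1..s} \<and> i \<in> {1..d}}"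

definition wheel_rim_edges :: "nat \<Rightarrow> (nat + nat) set set" where
  "wheel_rim_edges d = {{Inr i, Inr (i mod d + 1)} | i. i \<in> {1..d}}"

definition wheel_edges :: "nat \<Rightarrow> nat \<Rightarrow> (nat + nat) set set" where
  "wheel_edges d s = wheel_spokes d s \<union> wheel_rim_edges d"

(* theta_{t,l}: cycle v_1 ... v_t v_1 (vertex v_i = i) plus chords v_1 v_i for i in I,
   where I = {i_1 < ... < i_l} \<subseteq> {3..t-1} *)
definition theta_verts :: "nat \<Rightarrow> nat set" where
  "theta_verts t = {1..t}"

definition theta_edges :: "nat \<Rightarrow> nat set \<Rightarrow> nat set set" where
  "theta_edges t I = {{i, i mod t + 1} | i. i \<in> {1..t}} \<union> {{1, i} | i. i \<in> I}"

definition theta_vector :: "nat \<Rightarrow> nat set \<Rightarrow> nat list" where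
  "theta_vector t I = [2] @ sorted_list_of_set I @ [t]"

(* symmetric: l = 0 or i_j + i_{l+1-j} = t + 2 for every 1 <= j <= (l+1)/2;
   here i_j = (sorted_list_of_set I) ! (j - 1) *)
definition theta_symmetric :: "nat \<Rightarrow> nat set \<Rightarrow> bool" where
  "theta_symmetric t I =
     (let xs = sorted_list_of_set I; l = length xs in
      l = 0 \<or> (\<forall>j. 1 \<le> j \<and> 2 * j \<le> l + 1 \<longrightarrow> xs ! (j - 1) + xs ! (l - j) = t + 2))"

definition is_subgraph :: "'a set \<Rightarrow> 'a set set \<Rightarrow> 'a set \<Rightarrow> 'a set set \<Rightarrow> bool" where
  "is_subgraph V E VH EH \<longleftrightarrow> VH \<subseteq> V \<and> EH \<subseteq> E \<and> (\<forall>e\<in>EH. e \<subseteq> VH)"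

definition graph_iso :: "'a set \<Rightarrow> 'a set set \<Rightarrow> 'b set \<Rightarrow> 'b set set \<Rightarrow> bool" where
  "graph_iso V1 E1 V2 E2 \<longleftrightarrow>
     (\<exists>f. bij_betw f V1 V2 \<and>
          (\<forall>x\<in>V1. \<forall>y\<in>V1. {x, y} \<in> E1 \<longleftrightarrow> {f x, f y} \<in> E2))"

end

theory Submission
  imports Defs
begin

text \<open>A copy of \<open>\<theta>\<close> using one hub is rigid. Its cycle passes through the hub once, so the
  other \<open>t - 1\<close> vertices form a path on the rim, which cannot turn back and is therefore an arc
  traversed in a direction \<open>\<sigma> = \<plusminus>1\<close>. If the hub is \<open>v\<^sub>k\<close> with \<open>k \<noteq> 1\<close>, a chord from
  \<open>v\<^sub>1\<close> to another arc vertex would join two rim vertices that are not consecutive on the arc;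
  so the only possible chord is \<open>v\<^sub>1v\<^sub>k\<close>, and reading the arc from its other end turns the
  hub into \<open>v\<^sub>1\<close>. Hence a copy is determined by its hub \<open>a\<close>, its direction and the rim
  position \<open>p\<close> of \<open>v\<^sub>2\<close>.

  Fix the direction. The copies containing a rim edge have \<open>p\<close> in a window of \<open>t - 2\<close>
  consecutive positions, for each hub; those containing a spoke use its hub and have \<open>p\<close> in a
  window of \<open>t - 1\<close> positions. Since \<open>d \<ge> 2(t - 1)\<close>, the points covered twice by three windows
  of length \<open>M\<close> number at most \<open>M\<close>, and two different windows of length \<open>t - 2\<close> share at most
  \<open>t - 3\<close> points; a case analysis on how many of the three edges are spokes then bounds the
  number of pairs \<open>(a, p)\<close> by \<open>max (s(t - 2)) (t - 1)\<close>. If \<open>\<theta>\<close> is symmetric, reading a copy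
  backwards gives a copy in the other direction, so one direction suffices; otherwise the two
  directions double the bound.\<close>

definition rim_vertex :: "int \<Rightarrow> int \<Rightarrow> nat + nat" where
  "rim_vertex n y = Inr (nat (y mod n) + 1)"

lemma rim_vertex_eq_iff: "n > 0 \<Longrightarrow> rim_vertex n y = rim_vertex n z \<longleftrightarrow> n dvd y - z"
  unfolding rim_vertex_def by (simp add: eq_nat_nat_iff mod_eq_dvd_iff)

lemma rim_vertex_neq_Inl [simp]: "rim_vertex n y \<noteq> Inl a" "Inl a \<noteq> rim_vertex n y"
  unfolding rim_vertex_def by auto

lemma rim_vertex_mod_add: "rim_vertex n (p mod n + y) = rim_vertex n (p + y)"
  unfolding rim_vertex_def by (simp add: mod_add_left_eq)

lemma Inr_eq_rim_vertex: "i \<in> {1..d} \<Longrightarrow> Inr i = rim_vertex (int d) (int i - 1)"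
  by (cases i) (auto simp: rim_vertex_def)

lemma wheel_edgeE:
  assumes "e \<in> wheel_edges d s"
  obtains (rim) q where "0 \<le> q" "q < int d" "e = {rim_vertex (int d) q, rim_vertex (int d) (q + 1)}"
    | (spoke) a v where "a \<in> {1..s}" "0 \<le> v" "v < int d" "e = {Inl a, rim_vertex (int d) v}"
  using assms unfolding wheel_edges_def wheel_spokes_def wheel_rim_edges_def
proof (elim UnE CollectE exE conjE)
  fix a i assume "e = {Inl a, Inr i}" "a \<in> {1..s}" "i \<in> {1..d}"
  then show thesis using spoke[of a "int i - 1"] Inr_eq_rim_vertex[of i d] by auto
next
  fix i assume i: "e = {Inr i, Inr (i mod d + 1)}" "i \<in> {1..d}"
  have "Inr (i mod d + 1) = rim_vertex (int d) (int i)"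
    unfolding rim_vertex_def by (simp add: zmod_int[symmetric])
  then show thesis using rim[of "int i - 1"] Inr_eq_rim_vertex[of i d] i by auto
qed

lemma rim_vertices_adjacent:
  assumes "{rim_vertex (int d) u, rim_vertex (int d) w} \<in> wheel_edges d s" "d > 0"
  obtains \<epsilon> where "\<epsilon> = 1 \<or> \<epsilon> = -1" "int d dvd w - u - \<epsilon>"
  using assms(1)
proof (cases rule: wheel_edgeE)
  case (rim q)
  then consider
      "rim_vertex (int d) u = rim_vertex (int d) q" "rim_vertex (int d) w = rim_vertex (int d) (q + 1)"
    | "rim_vertex (int d) u = rim_vertex (int d) (q + 1)" "rim_vertex (int d) w = rim_vertex (int d) q"
    by (auto simp: doubleton_eq_iff)
  then show thesis
  proof cases
    case 1
    then have "int d dvd u - q" "int d dvd w - (q + 1)"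
      using assms(2) by (simp_all add: rim_vertex_eq_iff)
    from dvd_diff[OF this(2,1)] show thesis using that[of 1] by (simp add: algebra_simps)
  next
    case 2
    then have "int d dvd u - (q + 1)" "int d dvd w - q"
      using assms(2) by (simp_all add: rim_vertex_eq_iff)
    from dvd_diff[OF this(2,1)] show thesis using that[of "-1"] by (simp add: algebra_simps)
  qed
qed (auto simp: doubleton_eq_iff)

definition covered_twice :: "'a set \<Rightarrow> 'a set \<Rightarrow> 'a set \<Rightarrow> 'a set" where
  "covered_twice A B C = (A \<inter> B) \<union> (A \<inter> C) \<union> (B \<inter> C)"

lemma covered_twice_mono:
  "A \<subseteq> A' \<Longrightarrow> B \<subseteq> B' \<Longrightarrow> C \<subseteq> C' \<Longrightarrow> covered_twice A B C \<subseteq> covered_twice A' B' C'"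
  unfolding covered_twice_def by blast

lemma finite_covered_twice: "finite A \<Longrightarrow> finite B \<Longrightarrow> finite (covered_twice A B C)"
  unfolding covered_twice_def by blast

lemma card_covered_twice_le:
  assumes "finite A" "finite B" "finite C"
  shows "card (covered_twice A B C) + card (A \<union> B \<union> C) \<le> card A + card B + card C"
proof -
  have "covered_twice A B C = (A \<inter> B) \<union> ((A \<union> B) \<inter> C)"
    unfolding covered_twice_def by blast
  then have "card (covered_twice A B C) \<le> card (A \<inter> B) + card ((A \<union> B) \<inter> C)"
    by (simp add: card_Un_le)
  moreover have "card (A \<union> B) + card (A \<inter> B) = card A + card B"
    using card_Un_Int[OF assms(1,2)] by simp
  moreover have "card (A \<union> B \<union> C) + card ((A \<union> B) \<inter> C) = card (A \<union> B) + card C"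
    using card_Un_Int[of "A \<union> B" C] assms by simp
  ultimately show ?thesis by linarith
qed

text \<open>\<open>window n \<sigma> c M\<close>: the positions \<open>p\<close> of the \<open>n\<close>-cycle from which \<open>M - 1\<close> steps
  in direction \<open>\<sigma>\<close> suffice to reach \<open>c\<close>.\<close>

definition window :: "int \<Rightarrow> int \<Rightarrow> int \<Rightarrow> int \<Rightarrow> int set" where
  "window n \<sigma> c M = {p. 0 \<le> p \<and> p < n \<and> (\<sigma> * (c - p)) mod n < M}"

lemma finite_window [simp]: "finite (window n \<sigma> c M)"
  by (rule finite_subset[of _ "{0..<n}"]) (auto simp: window_def)

lemma window_mono: "M \<le> M' \<Longrightarrow> window n \<sigma> c M \<subseteq> window n \<sigma> c M'"
  by (auto simp: window_def)

lemma window_subset: "window n \<sigma> c M \<subseteq> {0..<n}"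
  by (auto simp: window_def)

lemma sign_dvd_iff: "\<sigma> = 1 \<or> \<sigma> = -1 \<Longrightarrow> (n::int) dvd \<sigma> * x \<longleftrightarrow> n dvd x"
  by auto

lemma window_subset_image:
  assumes "n > 0" "\<sigma> = 1 \<or> \<sigma> = -1" "0 \<le> M"
  shows "window n \<sigma> c M \<subseteq> (\<lambda>x. (c - \<sigma> * x) mod n) ` {0..<M}"
proof
  fix p assume p: "p \<in> window n \<sigma> c M"
  define x where "x = (\<sigma> * (c - p)) mod n"
  have x: "0 \<le> x" "x < M" using p assms by (auto simp: window_def x_def)
  have "n dvd \<sigma> * (\<sigma> * (c - p) - x)"
    unfolding x_def by simp
  also have "\<sigma> * (\<sigma> * (c - p) - x) = (c - \<sigma> * x) - p"
    using assms(2) by (elim disjE) (simp_all add: algebra_simps)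
  finally have "(c - \<sigma> * x) mod n = p mod n" by (simp only: mod_eq_dvd_iff)
  then have "(c - \<sigma> * x) mod n = p" using p by (simp add: window_def)
  then show "p \<in> (\<lambda>x. (c - \<sigma> * x) mod n) ` {0..<M}" using x by force
qed

lemma card_window_le:
  assumes "n > 0" "\<sigma> = 1 \<or> \<sigma> = -1" "0 \<le> M"
  shows "card (window n \<sigma> c M) \<le> nat M"
proof -
  have "card (window n \<sigma> c M) \<le> card ((\<lambda>x. (c - \<sigma> * x) mod n) ` {0..<M})"
    by (rule card_mono[OF _ window_subset_image[OF assms]]) simp
  also have "\<dots> \<le> card {0..<M}" by (rule card_image_le) simp
  finally show ?thesis by simp
qed

lemma covered_twice_intervals:
  fixes u v w M :: int
  defines "m \<equiv> max (min u v) (min (max u v) w)"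
  shows "covered_twice {u-M+1..u} {v-M+1..v} {w-M+1..w} \<subseteq> {m-M+1..m}"
  unfolding covered_twice_def m_def by (auto simp: min_def max_def)

lemma window_offset_shift:
  "(\<sigma> * (c' - p)) mod n = ((\<sigma> * (c - p)) mod n + (\<sigma> * (c' - c)) mod n) mod (n::int)"
  by (simp add: mod_add_eq algebra_simps)

lemma window_point_offset:
  assumes "\<sigma> = 1 \<or> \<sigma> = -1"
  shows "(\<sigma> * (c - (c - \<sigma> * x) mod n)) mod n = x mod (n::int)"
proof -
  have "(\<sigma> * (c - (c - \<sigma> * x) mod n)) mod n = (\<sigma> * (c - (c - \<sigma> * x))) mod n"
    by (metis mod_diff_right_eq mod_mult_right_eq)
  then show ?thesis using assms by auto
qed

lemma window_cut_at:
  fixes n :: int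
  assumes "n > 0" "z \<in> {0..<n}" "z \<notin> window n \<sigma> c M" "p \<in> window n \<sigma> c M"
  shows "(\<sigma> * (p - z)) mod n \<in> {(\<sigma> * (c - z)) mod n - M + 1 .. (\<sigma> * (c - z)) mod n}"
proof -
  define x where "x = (\<sigma> * (c - p)) mod n"
  have x: "0 \<le> x" "x < M" using assms(1,4) by (auto simp: window_def x_def)
  have b: "M \<le> (\<sigma> * (c - z)) mod n" "(\<sigma> * (c - z)) mod n < n"
    using assms(1-3) by (auto simp: window_def)
  have "(\<sigma> * (p - z)) mod n = ((\<sigma> * (c - z)) mod n - x) mod n"
    unfolding x_def by (simp add: mod_diff_eq algebra_simps)
  also have "\<dots> = (\<sigma> * (c - z)) mod n - x" using x b by (intro mod_pos_pos_trivial) auto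
  finally show ?thesis using x by simp
qed

lemma inj_on_signed_mod:
  fixes \<sigma> n :: int
  assumes "\<sigma> = 1 \<or> \<sigma> = -1"
  shows "inj_on (\<lambda>p. (\<sigma> * (p - z)) mod n) {0..<n}"
proof (rule inj_onI)
  fix p p' assume p: "p \<in> {0..<n}" "p' \<in> {0..<n}" and "(\<sigma> * (p - z)) mod n = (\<sigma> * (p' - z)) mod n"
  then have "n dvd \<sigma> * (p - p')"
    by (metis mod_eq_dvd_iff right_diff_distrib' diff_diff_eq2 diff_add_cancel)
  then have "p mod n = p' mod n" using sign_dvd_iff[OF assms] by (simp add: mod_eq_dvd_iff)
  then show "p = p'" using p by simp
qed

text \<open>If the three windows miss a point \<open>z\<close>, cutting the circle at \<open>z\<close> turns them into
  intervals, and the points covered twice lie within \<open>M\<close> of the median right end.\<close>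

lemma card_covered_twice_windows_le:
  assumes n: "n > 0" "0 \<le> M" "2 * M \<le> n" and sg: "\<sigma> = 1 \<or> \<sigma> = -1"
  shows "card (covered_twice (window n \<sigma> c1 M) (window n \<sigma> c2 M) (window n \<sigma> c3 M)) \<le> nat M"
    (is "card ?D \<le> _")
proof (cases "window n \<sigma> c1 M \<union> window n \<sigma> c2 M \<union> window n \<sigma> c3 M = {0..<n}")
  case True
  have "card ?D + nat n \<le> card (window n \<sigma> c1 M) + card (window n \<sigma> c2 M) + card (window n \<sigma> c3 M)"
    using card_covered_twice_le[of "window n \<sigma> c1 M" "window n \<sigma> c2 M" "window n \<sigma> c3 M"] True
    by simp
  moreover have "card (window n \<sigma> c1 M) \<le> nat M" "card (window n \<sigma> c2 M) \<le> nat M"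
      "card (window n \<sigma> c3 M) \<le> nat M"
    by (rule card_window_le[OF n(1) sg n(2)])+
  moreover have "2 * nat M \<le> nat n" using n by linarith
  ultimately show ?thesis by linarith
next
  case False
  then obtain z where z: "z \<in> {0..<n}" "z \<notin> window n \<sigma> c1 M \<union> window n \<sigma> c2 M \<union> window n \<sigma> c3 M"
    using window_subset by blast
  define cut where "cut p = (\<sigma> * (p - z)) mod n" for p
  define b where "b c = (\<sigma> * (c - z)) mod n" for c
  define m where "m = max (min (b c1) (b c2)) (min (max (b c1) (b c2)) (b c3))"
  have "cut ` window n \<sigma> c M \<subseteq> {b c - M + 1 .. b c}" if "c \<in> {c1, c2, c3}" for c
  proof
    fix y assume "y \<in> cut ` window n \<sigma> c M"
    then obtain p where p: "p \<in> window n \<sigma> c M" "y = cut p" by blast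
    have "z \<notin> window n \<sigma> c M" using z(2) that by blast
    from window_cut_at[OF n(1) z(1) this p(1)] show "y \<in> {b c - M + 1 .. b c}"
      unfolding p(2) cut_def b_def .
  qed
  then have "cut ` ?D \<subseteq> covered_twice {b c1 - M + 1 .. b c1} {b c2 - M + 1 .. b c2} {b c3 - M + 1 .. b c3}"
    unfolding covered_twice_def by blast
  also have "\<dots> \<subseteq> {m - M + 1 .. m}"
    unfolding m_def by (rule covered_twice_intervals)
  finally have "card (cut ` ?D) \<le> card {m - M + 1 .. m}"
    by (intro card_mono) auto
  moreover have "inj_on cut {0..<n}"
    unfolding cut_def[abs_def] by (rule inj_on_signed_mod[OF sg])
  then have "card (cut ` ?D) = card ?D"
    by (rule card_image[OF inj_on_subset]) (auto simp: covered_twice_def window_def)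
  ultimately show ?thesis by simp
qed

text \<open>Of the points at offsets \<open>0\<close> and \<open>L - 1\<close> in the first window, one lies outside the second.\<close>

lemma card_Int_windows_le:
  assumes n: "n > 0" "1 \<le> L" "2 * L \<le> n" and sg: "\<sigma> = 1 \<or> \<sigma> = -1"
    and ne: "c1 mod n \<noteq> c2 mod n"
  shows "card (window n \<sigma> c1 L \<inter> window n \<sigma> c2 L) \<le> nat L - 1"
proof -
  define point where "point x = (c1 - \<sigma> * x) mod n" for x
  define y where "y = (\<sigma> * (c2 - c1)) mod n"
  have y: "0 \<le> y" "y < n" using n by (simp_all add: y_def)
  have "y \<noteq> 0"
  proof
    assume "y = 0"
    then have "n dvd \<sigma> * (c2 - c1)" by (simp add: y_def dvd_eq_mod_eq_0)
    then have "n dvd c2 - c1" using sign_dvd_iff[OF sg] by simp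
    then show False using ne by (metis mod_eq_dvd_iff)
  qed
  have offset: "(\<sigma> * (c - point x)) mod n = ((x mod n) + (\<sigma> * (c - c1)) mod n) mod n" for c x
    using window_offset_shift[of \<sigma> c "point x" n c1] window_point_offset[OF sg, of c1 x n]
    by (simp add: point_def)
  have in_window: "point x \<in> window n \<sigma> c1 L" if "0 \<le> x" "x < L" for x
    using offset[of c1 x] that n by (simp add: window_def point_def)
  obtain x where x: "0 \<le> x" "x < L" "point x \<notin> window n \<sigma> c2 L"
  proof (cases "y < L")
    case True
    have "(\<sigma> * (c2 - point (L - 1))) mod n = L - 1 + y"
      using offset[of c2 "L - 1"] y n True by (simp add: y_def[symmetric])
    then show thesis using that[of "L - 1"] n True \<open>y \<noteq> 0\<close> y by (simp add: window_def)
  next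
    case False
    have "(\<sigma> * (c2 - point 0)) mod n = y"
      using offset[of c2 0] y by (simp add: y_def[symmetric])
    then show thesis using that[of 0] n False by (simp add: window_def)
  qed
  have "card (window n \<sigma> c1 L \<inter> window n \<sigma> c2 L) \<le> card (window n \<sigma> c1 L - {point x})"
    using x by (intro card_mono) auto
  also have "\<dots> = card (window n \<sigma> c1 L) - 1" using in_window x by simp
  also have "\<dots> \<le> nat L - 1" using card_window_le[OF n(1) sg] n by (simp add: diff_le_mono)
  finally show ?thesis .
qed

datatype edge_kind = Rim int | Spoke nat int

fun centre :: "edge_kind \<Rightarrow> int" where
  "centre (Rim c) = c"
| "centre (Spoke b c) = c"

text \<open>For a fixed direction, \<open>Q a\<close> collects the start positions of the placements with hub \<open>a\<close>
  that contain a given wheel edge. For a rim edge these lie in one window of length \<open>L = t - 2\<close>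
  for every hub; a spoke admits only its own hub, and a window of length \<open>L + 1\<close>.\<close>

locale hub_count =
  fixes n \<sigma> :: int and L s :: nat
  assumes n_large: "2 * (int L + 1) \<le> n" and sign: "\<sigma> = 1 \<or> \<sigma> = -1"
    and L_pos: "1 \<le> L" and s_pos: "1 \<le> s"
begin

lemma n_pos: "n > 0"
  using n_large by simp

fun fits :: "edge_kind \<Rightarrow> (nat \<Rightarrow> int set) \<Rightarrow> bool" where
  "fits (Rim c) Q \<longleftrightarrow> (\<forall>a. Q a \<subseteq> window n \<sigma> c (int L))"
| "fits (Spoke b c) Q \<longleftrightarrow> b \<in> {1..s} \<and> (\<forall>a. a \<noteq> b \<longrightarrow> Q a = {}) \<and> Q b \<subseteq> window n \<sigma> c (int L + 1)"

fun separated :: "edge_kind \<Rightarrow> edge_kind \<Rightarrow> bool" where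
  "separated (Rim c) (Rim c') \<longleftrightarrow> c mod n \<noteq> c' mod n"
| "separated _ _ \<longleftrightarrow> True"

definition twice_count :: "(nat \<Rightarrow> int set) \<Rightarrow> (nat \<Rightarrow> int set) \<Rightarrow> (nat \<Rightarrow> int set) \<Rightarrow> nat" where
  "twice_count Q1 Q2 Q3 = (\<Sum>a\<in>{1..s}. card (covered_twice (Q1 a) (Q2 a) (Q3 a)))"

lemma twice_count_commute:
  "twice_count Q1 Q2 Q3 = twice_count Q2 Q1 Q3" "twice_count Q1 Q2 Q3 = twice_count Q1 Q3 Q2"
  unfolding twice_count_def covered_twice_def by (simp_all add: Int_commute Un_ac)

lemma fits_window:
  assumes "fits k Q"
  shows "Q a \<subseteq> window n \<sigma> (centre k) (int L + 1)"
proof (cases k)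
  case (Rim c)
  then show ?thesis using assms window_mono[of "int L" "int L + 1" n \<sigma> c] by auto
next
  case (Spoke b c)
  then show ?thesis using assms by (cases "a = b") auto
qed

lemma fits_finite: "fits k Q \<Longrightarrow> finite (Q a)"
  by (rule finite_subset[OF fits_window]) simp_all

lemma card_fits_Rim:
  assumes "fits (Rim c) Q"
  shows "card (Q a) \<le> L"
proof -
  have "card (Q a) \<le> card (window n \<sigma> c (int L))"
    using assms by (intro card_mono) auto
  also have "\<dots> \<le> nat (int L)" by (rule card_window_le[OF n_pos sign]) simp
  finally show ?thesis by simp
qed

lemma card_covered_twice_fits:
  assumes "fits k1 Q1" "fits k2 Q2" "fits k3 Q3"
  shows "card (covered_twice (Q1 a) (Q2 a) (Q3 a)) \<le> L + 1"
proof -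
  let ?W = "\<lambda>k. window n \<sigma> (centre k) (int L + 1)"
  have "covered_twice (Q1 a) (Q2 a) (Q3 a) \<subseteq> covered_twice (?W k1) (?W k2) (?W k3)"
    using assms by (intro covered_twice_mono fits_window)
  then have "card (covered_twice (Q1 a) (Q2 a) (Q3 a)) \<le> card (covered_twice (?W k1) (?W k2) (?W k3))"
    by (simp add: card_mono finite_covered_twice)
  also have "\<dots> \<le> nat (int L + 1)"
    using n_large by (intro card_covered_twice_windows_le[OF n_pos _ _ sign]) auto
  finally show ?thesis by simp
qed

lemma twice_count_Rim_Rim_Rim:
  assumes "fits (Rim c1) Q1" "fits (Rim c2) Q2" "fits (Rim c3) Q3"
  shows "twice_count Q1 Q2 Q3 \<le> s * L"
proof -
  have "card (covered_twice (Q1 a) (Q2 a) (Q3 a)) \<le> L" for a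
  proof -
    let ?W = "\<lambda>c. window n \<sigma> c (int L)"
    have "covered_twice (Q1 a) (Q2 a) (Q3 a) \<subseteq> covered_twice (?W c1) (?W c2) (?W c3)"
      using assms by (intro covered_twice_mono) auto
    then have "card (covered_twice (Q1 a) (Q2 a) (Q3 a)) \<le> card (covered_twice (?W c1) (?W c2) (?W c3))"
      by (simp add: card_mono finite_covered_twice)
    also have "\<dots> \<le> nat (int L)"
      using n_large by (intro card_covered_twice_windows_le[OF n_pos _ _ sign]) auto
    finally show ?thesis by simp
  qed
  then have "twice_count Q1 Q2 Q3 \<le> of_nat (card {1..s}) * L"
    unfolding twice_count_def by (intro sum_bounded_above) auto
  then show ?thesis by simp
qed

lemma twice_count_at_Spoke:
  assumes "fits (Spoke b c) Q1"
  shows "twice_count Q1 Q2 Q3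
    = card (covered_twice (Q1 b) (Q2 b) (Q3 b)) + (\<Sum>a\<in>{1..s} - {b}. card (Q2 a \<inter> Q3 a))"
proof -
  have "b \<in> {1..s}" "\<And>a. a \<noteq> b \<Longrightarrow> Q1 a = {}" using assms by auto
  then show ?thesis
    unfolding twice_count_def by (simp add: sum.remove covered_twice_def)
qed

lemma twice_count_Spoke_Rim_Rim:
  assumes "fits (Spoke b c1) Q1" "fits (Rim c2) Q2" "fits (Rim c3) Q3" and "c2 mod n \<noteq> c3 mod n"
  shows "twice_count Q1 Q2 Q3 \<le> (s - 1) * (L - 1) + (L + 1)"
proof -
  have "card (Q2 a \<inter> Q3 a) \<le> L - 1" for a
  proof -
    have "card (Q2 a \<inter> Q3 a) \<le> card (window n \<sigma> c2 (int L) \<inter> window n \<sigma> c3 (int L))"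
      using assms(2,3) by (intro card_mono Int_mono) auto
    also have "\<dots> \<le> nat (int L) - 1"
      using n_large L_pos by (intro card_Int_windows_le[OF n_pos _ _ sign assms(4)]) auto
    finally show ?thesis by simp
  qed
  then have "(\<Sum>a\<in>{1..s} - {b}. card (Q2 a \<inter> Q3 a)) \<le> of_nat (card ({1..s} - {b})) * (L - 1)"
    by (intro sum_bounded_above) auto
  also have "card ({1..s} - {b}) = s - 1" using assms(1) by simp
  finally have "(\<Sum>a\<in>{1..s} - {b}. card (Q2 a \<inter> Q3 a)) \<le> (s - 1) * (L - 1)" by simp
  then show ?thesis
    using twice_count_at_Spoke[OF assms(1), of Q2 Q3] card_covered_twice_fits[OF assms(1-3), of b]
    by linarith
qed

lemma card_Int_fits_Rim: "fits (Rim c) Q \<Longrightarrow> card (Q a \<inter> A) \<le> L"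
  by (meson Int_lower1 card_fits_Rim card_mono fits_finite le_trans)

lemma twice_count_Spoke_Rim_Spoke:
  assumes "fits (Spoke b1 c1) Q1" "fits (Rim c2) Q2" "fits (Spoke b3 c3) Q3"
  shows "twice_count Q1 Q2 Q3 \<le> max (s * L) (L + 1)"
proof (cases "b3 = b1")
  case True
  then have "(\<Sum>a\<in>{1..s} - {b1}. card (Q2 a \<inter> Q3 a)) = 0"
    using assms(3) by (intro sum.neutral) auto
  then show ?thesis
    using twice_count_at_Spoke[OF assms(1), of Q2 Q3] card_covered_twice_fits[OF assms, of b1]
    by simp
next
  case False
  have "(\<Sum>a\<in>{1..s} - {b1}. card (Q2 a \<inter> Q3 a)) = card (Q2 b3 \<inter> Q3 b3)"
    using assms(3) False by (subst sum.mono_neutral_right[where S = "{b3}"]) auto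
  also have "\<dots> \<le> L" by (rule card_Int_fits_Rim[OF assms(2)])
  finally have "(\<Sum>a\<in>{1..s} - {b1}. card (Q2 a \<inter> Q3 a)) \<le> L" .
  moreover have "covered_twice (Q1 b1) (Q2 b1) (Q3 b1) = Q2 b1 \<inter> Q1 b1"
    using assms(3) False by (auto simp: covered_twice_def)
  then have "card (covered_twice (Q1 b1) (Q2 b1) (Q3 b1)) \<le> L"
    using card_Int_fits_Rim[OF assms(2)] by simp
  moreover have "2 * L \<le> s * L" using assms False by (intro mult_right_mono) auto
  ultimately show ?thesis using twice_count_at_Spoke[OF assms(1), of Q2 Q3] by linarith
qed

lemma twice_count_Spoke_Spoke_Spoke:
  assumes "fits (Spoke b1 c1) Q1" "fits (Spoke b2 c2) Q2" "fits (Spoke b3 c3) Q3"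
  shows "twice_count Q1 Q2 Q3 \<le> L + 1"
proof (cases "b2 = b3 \<and> b2 \<noteq> b1")
  case True
  then have "covered_twice (Q1 b1) (Q2 b1) (Q3 b1) = {}"
    using assms by (auto simp: covered_twice_def)
  moreover have "(\<Sum>a\<in>{1..s} - {b1}. card (Q2 a \<inter> Q3 a)) = card (covered_twice (Q1 b2) (Q2 b2) (Q3 b2))"
    using assms True by (subst sum.mono_neutral_right[where S = "{b2}"]) (auto simp: covered_twice_def)
  ultimately show ?thesis
    using twice_count_at_Spoke[OF assms(1), of Q2 Q3] card_covered_twice_fits[OF assms, of b2]
    by simp
next
  case False
  have "Q2 a \<inter> Q3 a = {}" if "a \<noteq> b1" for a
    using assms False that by (cases "a = b2") auto
  then have "(\<Sum>a\<in>{1..s} - {b1}. card (Q2 a \<inter> Q3 a)) = 0"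
    by (intro sum.neutral) auto
  then show ?thesis
    using twice_count_at_Spoke[OF assms(1), of Q2 Q3] card_covered_twice_fits[OF assms, of b1]
    by simp
qed

lemma twice_count_Spoke:
  assumes "fits (Spoke b c) Q1" "fits k2 Q2" "fits k3 Q3" "separated k2 k3"
  shows "twice_count Q1 Q2 Q3 \<le> max (s * L) (L + 1)"
proof (cases k2; cases k3)
  fix c2 c3 assume k: "k2 = Rim c2" "k3 = Rim c3"
  obtain s' L' where "s = Suc s'" "L = Suc L'" using s_pos L_pos not0_implies_Suc by fastforce
  then have "(s - 1) * (L - 1) + (L + 1) \<le> max (s * L) (L + 1)"
    by (cases s') (auto simp: algebra_simps)
  moreover have "twice_count Q1 Q2 Q3 \<le> (s - 1) * (L - 1) + (L + 1)"
    using twice_count_Spoke_Rim_Rim[of b c Q1 c2 Q2 c3 Q3] assms k by simp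
  ultimately show ?thesis by linarith
next
  fix c2 b3 c3 assume "k2 = Rim c2" "k3 = Spoke b3 c3"
  then show ?thesis using twice_count_Spoke_Rim_Spoke[of b c Q1 c2 Q2 b3 c3 Q3] assms by simp
next
  fix b2 c2 c3 assume "k2 = Spoke b2 c2" "k3 = Rim c3"
  then have "twice_count Q1 Q3 Q2 \<le> max (s * L) (L + 1)"
    using twice_count_Spoke_Rim_Spoke[of b c Q1 c3 Q3 b2 c2 Q2] assms by simp
  then show ?thesis by (simp only: twice_count_commute(2)[of Q1 Q2 Q3])
next
  fix b2 c2 b3 c3 assume "k2 = Spoke b2 c2" "k3 = Spoke b3 c3"
  then have "twice_count Q1 Q2 Q3 \<le> L + 1"
    using twice_count_Spoke_Spoke_Spoke[of b c Q1 b2 c2 Q2 b3 c3 Q3] assms by simp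
  then show ?thesis by simp
qed

lemma twice_count_le:
  assumes "fits k1 Q1" "fits k2 Q2" "fits k3 Q3"
    and "separated k1 k2" "separated k1 k3" "separated k2 k3"
  shows "twice_count Q1 Q2 Q3 \<le> max (s * L) (L + 1)"
proof -
  consider c1 c2 c3 where "k1 = Rim c1" "k2 = Rim c2" "k3 = Rim c3"
    | b c where "k1 = Spoke b c" | b c where "k2 = Spoke b c" | b c where "k3 = Spoke b c"
    by (metis edge_kind.exhaust)
  then show ?thesis
  proof cases
    case 1
    then have "twice_count Q1 Q2 Q3 \<le> s * L"
      using twice_count_Rim_Rim_Rim[of c1 Q1 c2 Q2 c3 Q3] assms by simp
    then show ?thesis by simp
  next
    case 2
    then show ?thesis using twice_count_Spoke[of b c Q1 k2 Q2 k3 Q3] assms by simp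
  next
    case 3
    then have "twice_count Q2 Q1 Q3 \<le> max (s * L) (L + 1)"
      using twice_count_Spoke[of b c Q2 k1 Q1 k3 Q3] assms by simp
    then show ?thesis by (simp only: twice_count_commute(1)[of Q1 Q2 Q3])
  next
    case 4
    then have "twice_count Q3 Q1 Q2 \<le> max (s * L) (L + 1)"
      using twice_count_Spoke[of b c Q3 k1 Q1 k2 Q2] assms by simp
    then show ?thesis by (metis twice_count_commute)
  qed
qed

end

text \<open>The copy of \<open>\<theta>\<close> with \<open>v\<^sub>1\<close> at the hub \<open>Inl a\<close> and \<open>v\<^sub>i\<close> (\<open>2 \<le> i \<le> t\<close>) at the rim
  position \<open>p + \<sigma> (i - 2)\<close>; \<open>S\<close> holds the offsets \<open>i - 2\<close> of the hub's rim neighbours.\<close>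

definition placed_verts :: "int \<Rightarrow> nat \<Rightarrow> nat \<Rightarrow> int \<Rightarrow> int \<Rightarrow> (nat + nat) set" where
  "placed_verts n t a p \<sigma> = insert (Inl a) ((\<lambda>x. rim_vertex n (p + \<sigma> * x)) ` {0..int t - 2})"

definition placed_edges :: "int \<Rightarrow> nat \<Rightarrow> nat \<Rightarrow> int \<Rightarrow> int \<Rightarrow> int set \<Rightarrow> (nat + nat) set set" where
  "placed_edges n t a p \<sigma> S =
     (\<lambda>x. {rim_vertex n (p + \<sigma> * x), rim_vertex n (p + \<sigma> * (x + 1))}) ` {0..<int t - 2}
     \<union> (\<lambda>x. {Inl a, rim_vertex n (p + \<sigma> * x)}) ` S"

definition spoke_offsets :: "nat \<Rightarrow> nat set \<Rightarrow> int set" where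
  "spoke_offsets t I = {0, int t - 2} \<union> (\<lambda>i. int i - 2) ` I"

definition reflect_offsets :: "nat \<Rightarrow> int set \<Rightarrow> int set" where
  "reflect_offsets t S = (\<lambda>x. int t - 2 - x) ` S"

text \<open>The end of the rim edge \<open>{q, q + 1}\<close> that a placement in direction \<open>\<sigma>\<close> meets first.\<close>

definition rim_centre :: "int \<Rightarrow> int \<Rightarrow> int" where
  "rim_centre \<sigma> q = (if \<sigma> = 1 then q else q + 1)"

lemma placed_verts_mod: "placed_verts n t a (p mod n) \<sigma> = placed_verts n t a p \<sigma>"
  unfolding placed_verts_def by (simp add: rim_vertex_mod_add)

lemma placed_edges_mod: "placed_edges n t a (p mod n) \<sigma> S = placed_edges n t a p \<sigma> S"
  unfolding placed_edges_def by (simp add: rim_vertex_mod_add)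

lemma placed_edges_Un:
  "placed_edges n t a p \<sigma> (S \<union> S') = placed_edges n t a p \<sigma> S \<union> (\<lambda>x. {Inl a, rim_vertex n (p + \<sigma> * x)}) ` S'"
  unfolding placed_edges_def by auto

lemma spoke_offsets_subset: "I \<subseteq> {3..<t} \<Longrightarrow> t \<ge> 2 \<Longrightarrow> spoke_offsets t I \<subseteq> {0..int t - 2}"
  unfolding spoke_offsets_def by auto

lemma rim_edge_in_placed_edges:
  assumes n: "n \<ge> 3" "int t - 2 \<le> n" and sg: "\<sigma> = 1 \<or> \<sigma> = -1"
    and e: "{rim_vertex n q, rim_vertex n (q + 1)} \<in> placed_edges n t a p \<sigma> S"
  shows "(\<sigma> * (rim_centre \<sigma> q - p)) mod n < int t - 2"
proof -
  from e obtain x where x: "0 \<le> x" "x < int t - 2"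
    and eq: "{rim_vertex n q, rim_vertex n (q + 1)} = {rim_vertex n (p + \<sigma> * x), rim_vertex n (p + \<sigma> * (x + 1))}"
    unfolding placed_edges_def by (auto simp: doubleton_eq_iff)
  have n_not_dvd_2: "\<not> n dvd 2" using zdvd_imp_le[of n 2] n(1) by auto
  from eq consider
      "n dvd q - (p + \<sigma> * x)" "n dvd (q + 1) - (p + \<sigma> * (x + 1))"
    | "n dvd q - (p + \<sigma> * (x + 1))" "n dvd (q + 1) - (p + \<sigma> * x)"
    using n(1) by (auto simp: doubleton_eq_iff rim_vertex_eq_iff)
  then have "n dvd \<sigma> * (rim_centre \<sigma> q - p) - x"
  proof cases
    case 1
    from dvd_diff[OF this(2,1)] have "n dvd 1 - \<sigma>" by (simp add: algebra_simps)
    then have "\<sigma> = 1" using sg n_not_dvd_2 by auto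
    then show ?thesis using 1 by (simp add: rim_centre_def algebra_simps)
  next
    case 2
    from dvd_diff[OF this(2,1)] have "n dvd 1 + \<sigma>" by (simp add: algebra_simps)
    then have "\<sigma> = -1" using sg n_not_dvd_2 by auto
    moreover have "n dvd - ((q + 1) - (p + \<sigma> * x))" using 2(2) by (simp only: dvd_minus_iff)
    ultimately show ?thesis by (simp add: rim_centre_def algebra_simps)
  qed
  then have "(\<sigma> * (rim_centre \<sigma> q - p)) mod n = x mod n" by (simp only: mod_eq_dvd_iff)
  then show ?thesis using x n by simp
qed

lemma spoke_in_placed_edges:
  assumes n: "n > int t - 2" and sg: "\<sigma> = 1 \<or> \<sigma> = -1" and S: "S \<subseteq> {0..int t - 2}"
    and e: "{Inl b, rim_vertex n v} \<in> placed_edges n t a p \<sigma> S"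
  shows "b = a \<and> (\<sigma> * (v - p)) mod n < int t - 1"
proof -
  from e obtain x where x: "x \<in> S" and "b = a" "rim_vertex n v = rim_vertex n (p + \<sigma> * x)"
    unfolding placed_edges_def by (auto simp: doubleton_eq_iff)
  moreover have "n > 0" using n S x by force
  ultimately have "n dvd \<sigma> * (v - (p + \<sigma> * x))" by (simp add: rim_vertex_eq_iff)
  also have "\<sigma> * (v - (p + \<sigma> * x)) = \<sigma> * (v - p) - x"
    using sg by (auto simp: algebra_simps)
  finally have "(\<sigma> * (v - p)) mod n = x mod n" by (simp only: mod_eq_dvd_iff)
  then show ?thesis using \<open>b = a\<close> x S n by auto
qed

lemma image_reindex:
  assumes "\<And>x. x \<in> A \<Longrightarrow> G x = F (g x)" "g ` A = A"
  shows "G ` A = F ` A"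
  using assms by (metis image_cong image_image)

lemma placed_edges_reflect:
  "placed_edges n t a (p + \<sigma> * (int t - 2)) (-\<sigma>) S = placed_edges n t a p \<sigma> (reflect_offsets t S)"
proof -
  have "(\<lambda>x. int t - 3 - x) ` {0..<int t - 2} = {0..<int t - 2}"
    by (auto intro!: image_eqI[where x = "int t - 3 - y" for y])
  then have "(\<lambda>x. {rim_vertex n (p + \<sigma> * (int t - 2) + - \<sigma> * x),
                   rim_vertex n (p + \<sigma> * (int t - 2) + - \<sigma> * (x + 1))}) ` {0..<int t - 2}
      = (\<lambda>x. {rim_vertex n (p + \<sigma> * x), rim_vertex n (p + \<sigma> * (x + 1))}) ` {0..<int t - 2}"
    by (intro image_reindex[where g = "\<lambda>x. int t - 3 - x"]) (simp_all add: algebra_simps insert_commute)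
  then show ?thesis
    unfolding placed_edges_def reflect_offsets_def image_image by (simp add: algebra_simps)
qed

lemma placed_verts_reflect:
  "placed_verts n t a (p + \<sigma> * (int t - 2)) (-\<sigma>) = placed_verts n t a p \<sigma>"
proof -
  have "(\<lambda>x. int t - 2 - x) ` {0..int t - 2} = {0..int t - 2}"
    by (auto intro!: image_eqI[where x = "int t - 2 - y" for y])
  then have "(\<lambda>x. rim_vertex n (p + \<sigma> * (int t - 2) + - \<sigma> * x)) ` {0..int t - 2}
      = (\<lambda>x. rim_vertex n (p + \<sigma> * x)) ` {0..int t - 2}"
    by (intro image_reindex[where g = "\<lambda>x. int t - 2 - x"]) (simp_all add: algebra_simps)
  then show ?thesis unfolding placed_verts_def by simp
qed

lemma theta_symmetric_mirror:
  assumes sym: "theta_symmetric t I" and fin: "finite I" and i: "i \<in> I"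
  shows "t + 2 - i \<in> I \<and> i \<le> t + 2"
proof -
  define xs where "xs = sorted_list_of_set I"
  define l where "l = length xs"
  have set_xs: "set xs = I" using fin unfolding xs_def by simp
  from i set_xs obtain m where m: "m < l" "xs ! m = i" unfolding l_def by (metis in_set_conv_nth)
  have mirror: "xs ! (j - 1) + xs ! (l - j) = t + 2" if "1 \<le> j" "2 * j \<le> l + 1" for j
    using sym m(1) that unfolding theta_symmetric_def Let_def xs_def l_def by auto
  have mem: "xs ! q \<in> I" if "q < l" for q using that set_xs unfolding l_def by (metis nth_mem)
  show ?thesis
  proof (cases "2 * (m + 1) \<le> l + 1")
    case True
    then have "xs ! m + xs ! (l - (m + 1)) = t + 2" using mirror[of "m + 1"] by simp
    then have "t + 2 - i = xs ! (l - (m + 1))" "i \<le> t + 2" using m by linarith+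
    then show ?thesis using m mem[of "l - (m + 1)"] by auto
  next
    case False
    then have "xs ! (l - m - 1) + xs ! m = t + 2" using mirror[of "l - m"] m by (simp add: Suc_diff_Suc)
    then have "t + 2 - i = xs ! (l - m - 1)" "i \<le> t + 2" using m by linarith+
    then show ?thesis using m mem[of "l - m - 1"] by auto
  qed
qed

lemma reflect_spoke_offsets:
  assumes sym: "theta_symmetric t I" and I: "I \<subseteq> {3..<t}"
  shows "reflect_offsets t (spoke_offsets t I) = spoke_offsets t I"
proof -
  have fin: "finite I" using I finite_subset by blast
  have sub: "reflect_offsets t (spoke_offsets t I) \<subseteq> spoke_offsets t I"
  proof
    fix y assume "y \<in> reflect_offsets t (spoke_offsets t I)"
    then obtain x where x: "x \<in> spoke_offsets t I" "y = int t - 2 - x"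
      unfolding reflect_offsets_def by auto
    from x(1) consider "x = 0" | "x = int t - 2" | i where "i \<in> I" "x = int i - 2"
      unfolding spoke_offsets_def by auto
    then show "y \<in> spoke_offsets t I"
    proof cases
      case 3
      with theta_symmetric_mirror[OF sym fin] have "t + 2 - i \<in> I" "y = int (t + 2 - i) - 2"
        using x(2) by auto
      then show ?thesis unfolding spoke_offsets_def by blast
    qed (use x in \<open>auto simp: spoke_offsets_def\<close>)
  qed
  have "spoke_offsets t I = reflect_offsets t (reflect_offsets t (spoke_offsets t I))"
    unfolding reflect_offsets_def image_image by simp
  also have "\<dots> \<subseteq> reflect_offsets t (spoke_offsets t I)"
    using sub unfolding reflect_offsets_def by (rule image_mono)
  finally show ?thesis using sub by blast
qed

lemma two_le_card_Int_iff:
  assumes "e1 \<noteq> e2" "e1 \<noteq> e3" "e2 \<noteq> e3"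
  shows "2 \<le> card ({e1, e2, e3} \<inter> E) \<longleftrightarrow> (e1 \<in> E \<and> e2 \<in> E) \<or> (e1 \<in> E \<and> e3 \<in> E) \<or> (e2 \<in> E \<and> e3 \<in> E)"
  using assms by (cases "e1 \<in> E"; cases "e2 \<in> E"; cases "e3 \<in> E") (auto simp: card_insert_if Int_insert_left)

context hub_count
begin

lemma placements_with_edge_fit:
  assumes n: "n = int d" and L: "L = t - 2" and S: "S \<subseteq> {0..int t - 2}" and e: "e \<in> wheel_edges d s"
    and Q: "\<And>a. Q a = {p. 0 \<le> p \<and> p < n \<and> e \<in> placed_edges n t a p \<sigma> S}"
  obtains k where "fits k Q"
    and "\<And>c. k = Rim c \<Longrightarrow> \<exists>q. e = {rim_vertex n q, rim_vertex n (q + 1)} \<and> c = rim_centre \<sigma> q"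
proof -
  have t: "int L = int t - 2" "3 \<le> n" "int t - 2 < n"
    using L L_pos n_large by auto
  from e show thesis
  proof (cases rule: wheel_edgeE)
    case (rim q)
    then have e_eq: "e = {rim_vertex n q, rim_vertex n (q + 1)}" using n by simp
    have "fits (Rim (rim_centre \<sigma> q)) Q"
      unfolding fits.simps
    proof (intro allI subsetI)
      fix a p assume "p \<in> Q a"
      then have "p \<in> {p. 0 \<le> p \<and> p < n \<and> e \<in> placed_edges n t a p \<sigma> S}" by (simp only: Q)
      then show "p \<in> window n \<sigma> (rim_centre \<sigma> q) (int L)"
        using rim_edge_in_placed_edges[OF t(2) _ sign, of t q a p S] e_eq t by (auto simp: window_def)
    qed
    then show thesis by (rule that) (use e_eq in auto)
  next
    case (spoke b v)
    then have e_eq: "e = {Inl b, rim_vertex n v}" using n by simp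
    have "fits (Spoke b v) Q"
      using spoke_in_placed_edges[OF t(3) sign S] spoke(1) e_eq t by (auto simp: Q window_def)
    then show thesis by (rule that) simp
  qed
qed

lemma rim_edge_eq_of_rim_centre:
  assumes "n > 0" and e: "e = {rim_vertex n q, rim_vertex n (q + 1)}" "e' = {rim_vertex n q', rim_vertex n (q' + 1)}"
    and "rim_centre \<sigma> q mod n = rim_centre \<sigma> q' mod n"
  shows "e = e'"
proof -
  have "n dvd q - q'" using assms(4) by (cases "\<sigma> = 1") (simp_all add: rim_centre_def mod_eq_dvd_iff)
  then have "rim_vertex n q = rim_vertex n q'" "rim_vertex n (q + 1) = rim_vertex n (q' + 1)"
    using assms(1) by (simp_all add: rim_vertex_eq_iff)
  then show ?thesis using e by simp
qed

lemma edge_kinds: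
  assumes n: "n = int d" and L: "L = t - 2" and S: "S \<subseteq> {0..int t - 2}" and T: "T \<subseteq> wheel_edges d s"
  obtains k where "\<And>e. e \<in> T \<Longrightarrow> fits (k e) (\<lambda>a. {p. 0 \<le> p \<and> p < n \<and> e \<in> placed_edges n t a p \<sigma> S})"
    and "\<And>e e'. e \<in> T \<Longrightarrow> e' \<in> T \<Longrightarrow> e \<noteq> e' \<Longrightarrow> separated (k e) (k e')"
proof -
  define Q where "Q e = (\<lambda>a. {p. 0 \<le> p \<and> p < n \<and> e \<in> placed_edges n t a p \<sigma> S})" for e
  define rim_edge_at where "rim_edge_at e c \<longleftrightarrow>
      (\<exists>q. e = {rim_vertex n q, rim_vertex n (q + 1)} \<and> c = rim_centre \<sigma> q)" for e c
  have "\<forall>e\<in>T. \<exists>k. fits k (Q e) \<and> (\<forall>c. k = Rim c \<longrightarrow> rim_edge_at e c)"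
  proof
    fix e assume e: "e \<in> T"
    obtain k where "fits k (Q e)" "\<And>c. k = Rim c \<Longrightarrow> rim_edge_at e c"
      unfolding rim_edge_at_def
      by (rule placements_with_edge_fit[OF n L S, where e = e and Q = "Q e"]) (use e T Q_def in auto)
    then show "\<exists>k. fits k (Q e) \<and> (\<forall>c. k = Rim c \<longrightarrow> rim_edge_at e c)" by blast
  qed
  from bchoice[OF this] obtain k
    where k: "\<forall>e\<in>T. fits (k e) (Q e) \<and> (\<forall>c. k e = Rim c \<longrightarrow> rim_edge_at e c)" ..
  have "separated (k e) (k e')" if e: "e \<in> T" "e' \<in> T" "e \<noteq> e'" for e e'
  proof (cases "k e"; cases "k e'")
    fix c c' assume kind: "k e = Rim c" "k e' = Rim c'"
    have "rim_edge_at e c" "rim_edge_at e' c'" using k e kind by simp_all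
    then obtain q q' where q: "e = {rim_vertex n q, rim_vertex n (q + 1)}" "c = rim_centre \<sigma> q"
      and q': "e' = {rim_vertex n q', rim_vertex n (q' + 1)}" "c' = rim_centre \<sigma> q'"
      unfolding rim_edge_at_def by blast
    have "c mod n \<noteq> c' mod n"
      using e(3) rim_edge_eq_of_rim_centre[OF n_pos q(1) q'(1)] q(2) q'(2) by blast
    then show ?thesis using kind by simp
  qed auto
  then show thesis using that k unfolding Q_def by blast
qed

end

definition placements_meeting :: "nat \<Rightarrow> nat \<Rightarrow> nat \<Rightarrow> int set \<Rightarrow> (nat + nat) set set \<Rightarrow> int \<Rightarrow> (nat \<times> int) set" where
  "placements_meeting d s t S T \<sigma> =
     {(a, p). a \<in> {1..s} \<and> 0 \<le> p \<and> p < int d \<and> 2 \<le> card (T \<inter> placed_edges (int d) t a p \<sigma> S)}"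

lemma finite_placements_meeting: "finite (placements_meeting d s t S T \<sigma>)"
  by (rule finite_subset[of _ "{1..s} \<times> {0..<int d}"]) (auto simp: placements_meeting_def)

lemma card_placements_le:
  assumes s: "s \<ge> 1" and t: "t \<ge> 4" and d: "d \<ge> 3 * t - 5" and sg: "\<sigma> = 1 \<or> \<sigma> = -1"
    and S: "S \<subseteq> {0..int t - 2}" and T: "T \<subseteq> wheel_edges d s" "card T = 3"
  shows "card (placements_meeting d s t S T \<sigma>) \<le> max (s * (t - 2)) (t - 1)"
proof -
  interpret hub_count "int d" \<sigma> "t - 2" s
    using s t d sg by unfold_locales auto
  define Q where "Q e = (\<lambda>a. {p. 0 \<le> p \<and> p < int d \<and> e \<in> placed_edges (int d) t a p \<sigma> S})" for e
  obtain k where fit: "\<And>e. e \<in> T \<Longrightarrow> fits (k e) (Q e)"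
    and sep: "\<And>e e'. e \<in> T \<Longrightarrow> e' \<in> T \<Longrightarrow> e \<noteq> e' \<Longrightarrow> separated (k e) (k e')"
    unfolding Q_def by (rule edge_kinds[OF refl refl S T(1)]) blast
  obtain e1 e2 e3 where T_eq: "T = {e1, e2, e3}" and dist: "e1 \<noteq> e2" "e1 \<noteq> e3" "e2 \<noteq> e3"
    using T(2) by (auto simp: card_3_iff)
  then have e: "e1 \<in> T" "e2 \<in> T" "e3 \<in> T" by auto
  have "placements_meeting d s t S T \<sigma> = Sigma {1..s} (\<lambda>a. covered_twice (Q e1 a) (Q e2 a) (Q e3 a))"
    unfolding placements_meeting_def T_eq two_le_card_Int_iff[OF dist] covered_twice_def Q_def
    by (simp add: set_eq_iff) blast
  moreover have "card (Sigma {1..s} (\<lambda>a. covered_twice (Q e1 a) (Q e2 a) (Q e3 a))) = twice_count (Q e1) (Q e2) (Q e3)"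
    unfolding twice_count_def using fit e
    by (intro card_SigmaI) (auto intro: finite_covered_twice fits_finite)
  moreover have "twice_count (Q e1) (Q e2) (Q e3) \<le> max (s * (t - 2)) (t - 2 + 1)"
    using twice_count_le[OF fit[OF e(1)] fit[OF e(2)] fit[OF e(3)]
        sep[OF e(1,2) dist(1)] sep[OF e(1,3) dist(2)] sep[OF e(2,3) dist(3)]] by simp
  moreover have "t - 2 + 1 = t - 1" using t by simp
  ultimately show ?thesis by simp
qed

definition cycle_step :: "nat \<Rightarrow> nat \<Rightarrow> nat \<Rightarrow> nat" where
  "cycle_step t k j = (k - 1 + j) mod t + 1"

lemma cycle_step_range: "t > 0 \<Longrightarrow> cycle_step t k j \<in> {1..t}"
  by (simp add: cycle_step_def Suc_leI)

lemma cycle_step_Suc: "cycle_step t k (Suc j) = cycle_step t k j mod t + 1"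
  by (simp add: cycle_step_def mod_Suc_eq)

lemma cycle_step_0: "1 \<le> k \<Longrightarrow> k \<le> t \<Longrightarrow> cycle_step t k 0 = k"
  by (simp add: cycle_step_def)

lemma cycle_step_period: "1 \<le> k \<Longrightarrow> k \<le> t \<Longrightarrow> cycle_step t k t = k"
  unfolding cycle_step_def using mod_add_self2[of "k - 1" t] by simp

lemma cycle_step_back_to_1: "1 \<le> k \<Longrightarrow> k \<le> t \<Longrightarrow> cycle_step t k (t + 1 - k) = 1"
  by (simp add: cycle_step_def)

lemma inj_on_cycle_step: "inj_on (cycle_step t k) {0..<t}"
proof (rule inj_onI)
  fix i j assume ij: "i \<in> {0..<t}" "j \<in> {0..<t}" "cycle_step t k i = cycle_step t k j"
  then have "int t dvd (int (k - 1) + int i) - (int (k - 1) + int j)"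
    unfolding cycle_step_def by (metis add_right_cancel mod_eq_dvd_iff of_nat_add zmod_int)
  then have "int t dvd int i - int j" by simp
  then show "i = j" using ij dvd_imp_le_int[of "int i - int j" "int t"] by fastforce
qed

lemma cycle_step_image:
  assumes "1 \<le> k" "k \<le> t"
  shows "cycle_step t k ` {0..<t} = {1..t}"
proof -
  have "cycle_step t k ` {0..<t} \<subseteq> {1..t}" using cycle_step_range assms by auto
  moreover have "card (cycle_step t k ` {0..<t}) = card {1..t}"
    using card_image[OF inj_on_cycle_step] by simp
  ultimately show ?thesis by (simp add: card_subset_eq)
qed

lemma image_int_pred: "(\<lambda>j::nat. int j - 1) ` {1..<m} = {0..<int m - 1}"
proof -
  have "x \<in> (\<lambda>j::nat. int j - 1) ` {1..<m}" if "x \<in> {0..<int m - 1}" for x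
    using that by (intro image_eqI[of _ _ "nat (x + 1)"]) auto
  then show ?thesis by auto
qed

text \<open>An injective walk along the \<open>n\<close>-cycle can never turn round, so it runs along an arc.\<close>

lemma walk_along_arc:
  fixes g :: "nat \<Rightarrow> int"
  assumes step: "\<And>j. 1 \<le> j \<Longrightarrow> j < m \<Longrightarrow> \<exists>\<epsilon>. (\<epsilon> = 1 \<or> \<epsilon> = -1) \<and> n dvd g (Suc j) - g j - \<epsilon>"
    and no_return: "\<And>j. 1 \<le> j \<Longrightarrow> j + 2 \<le> m \<Longrightarrow> \<not> n dvd g (j + 2) - g j"
  obtains \<sigma> where "\<sigma> = 1 \<or> \<sigma> = -1" "\<And>j. 1 \<le> j \<Longrightarrow> j \<le> m \<Longrightarrow> n dvd g j - g 1 - \<sigma> * (int j - 1)"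
proof -
  obtain \<sigma> where \<sigma>: "\<sigma> = 1 \<or> \<sigma> = -1" and first: "2 \<le> m \<Longrightarrow> n dvd g 2 - g 1 - \<sigma>"
    using step[of 1] by (cases "2 \<le> m") (auto simp: numeral_2_eq_2)
  have "n dvd g j - g 1 - \<sigma> * (int j - 1)" if "1 \<le> j" "j \<le> m" for j
    using that
  proof (induction j rule: less_induct)
    case (less j)
    show ?case
    proof (cases "j \<le> 2")
      case True
      then have "j = 1 \<or> j = 2" using less.prems by auto
      then show ?thesis using first less.prems by auto
    next
      case False
      define i where "i = j - 2"
      have j: "j = i + 2" "1 \<le> i" using False unfolding i_def by auto
      have "n dvd g (i + 1) - g 1 - \<sigma> * (int (i + 1) - 1)" "n dvd g i - g 1 - \<sigma> * (int i - 1)"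
        using less.IH[of "i + 1"] less.IH[of i] less.prems j by simp_all
      then have IH: "n dvd g (i + 1) - g 1 - \<sigma> * int i" "n dvd g i - g 1 - \<sigma> * (int i - 1)"
        by simp_all
      obtain \<epsilon> where \<epsilon>: "\<epsilon> = 1 \<or> \<epsilon> = -1" "n dvd g (i + 2) - g (i + 1) - \<epsilon>"
        using step[of "i + 1"] less.prems j by auto
      from dvd_diff[OF dvd_add[OF \<epsilon>(2) IH(1)] IH(2)] have "n dvd g (i + 2) - g i - (\<epsilon> + \<sigma>)"
        by (simp add: algebra_simps)
      then have "\<epsilon> = \<sigma>" using no_return[of i] less.prems j \<sigma> \<epsilon>(1) by auto
      from dvd_add[OF \<epsilon>(2) IH(1)] show ?thesis using j \<open>\<epsilon> = \<sigma>\<close> by (simp add: algebra_simps)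
    qed
  qed
  then show thesis using that \<sigma> by blast
qed

locale theta_embedding =
  fixes d s t :: nat and I :: "nat set" and f :: "nat \<Rightarrow> nat + nat" and k a :: nat
  assumes t_ge: "4 \<le> t" and d_ge: "int t + 2 \<le> int d" and I_sub: "I \<subseteq> {3..<t}"
    and inj: "inj_on f {1..t}"
    and edges: "\<And>e. e \<in> theta_edges t I \<Longrightarrow> f ` e \<in> wheel_edges d s"
    and hub: "k \<in> {1..t}" "f k = Inl a"
    and rim: "\<And>x. x \<in> {1..t} \<Longrightarrow> x \<noteq> k \<Longrightarrow> f x \<in> wheel_rim d"
begin

definition walk :: "nat \<Rightarrow> nat + nat" where
  "walk j = f (cycle_step t k j)"

lemma k_bounds: "1 \<le> k" "k \<le> t"
  using hub(1) by auto

lemma d_pos: "d > 0"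
  using d_ge by simp

lemma walk_hub: "walk 0 = Inl a" "walk t = Inl a"
  using hub k_bounds by (simp_all add: walk_def cycle_step_0 cycle_step_period)

lemma walk_edge: "{walk j, walk (Suc j)} \<in> wheel_edges d s"
proof -
  have "{cycle_step t k j, cycle_step t k j mod t + 1} \<in> theta_edges t I"
    using cycle_step_range[of t k j] t_ge unfolding theta_edges_def by auto
  from edges[OF this] show ?thesis by (simp add: walk_def cycle_step_Suc)
qed

lemma walk_inj:
  assumes "i < t" "j < t" "walk i = walk j"
  shows "i = j"
proof -
  have "cycle_step t k i = cycle_step t k j"
    using inj_onD[OF inj _ cycle_step_range cycle_step_range] assms(3) t_ge by (simp add: walk_def)
  from inj_onD[OF inj_on_cycle_step this] show ?thesis using assms(1,2) by simp
qed

lemma walk_rim: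
  assumes "1 \<le> j" "j < t"
  obtains r where "walk j = rim_vertex (int d) r"
proof -
  have "cycle_step t k j \<noteq> k"
    using walk_inj[of j 0] assms walk_hub(1) hub(2) by (auto simp: walk_def)
  then have "walk j \<in> wheel_rim d"
    using rim cycle_step_range[of t k j] t_ge by (simp add: walk_def)
  then obtain i where "i \<in> {1..d}" "walk j = Inr i" unfolding wheel_rim_def by auto
  then show thesis using that[of "int i - 1"] Inr_eq_rim_vertex[of i d] by simp
qed

lemma walk_arc:
  obtains p \<sigma> where "\<sigma> = 1 \<or> \<sigma> = -1"
    and "\<And>j. 1 \<le> j \<Longrightarrow> j < t \<Longrightarrow> walk j = rim_vertex (int d) (p + \<sigma> * (int j - 1))"
proof -
  define pos where "pos j = (SOME r. walk j = rim_vertex (int d) r)" for j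
  have pos: "walk j = rim_vertex (int d) (pos j)" if j: "1 \<le> j" "j < t" for j
  proof -
    obtain r where "walk j = rim_vertex (int d) r" using walk_rim[OF j] .
    then show ?thesis unfolding pos_def by (rule someI)
  qed
  obtain \<sigma> where \<sigma>: "\<sigma> = 1 \<or> \<sigma> = -1"
    and arc: "\<And>j. 1 \<le> j \<Longrightarrow> j \<le> t - 1 \<Longrightarrow> int d dvd pos j - pos 1 - \<sigma> * (int j - 1)"
  proof (rule walk_along_arc)
    fix j assume j: "1 \<le> j" "j < t - 1"
    then have "{rim_vertex (int d) (pos j), rim_vertex (int d) (pos (Suc j))} \<in> wheel_edges d s"
      using walk_edge[of j] pos[of j] pos[of "Suc j"] by simp
    then obtain \<epsilon> where "\<epsilon> = 1 \<or> \<epsilon> = -1" "int d dvd pos (Suc j) - pos j - \<epsilon>"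
      using d_pos by (rule rim_vertices_adjacent)
    then show "\<exists>\<epsilon>. (\<epsilon> = 1 \<or> \<epsilon> = -1) \<and> int d dvd pos (Suc j) - pos j - \<epsilon>" by blast
  next
    fix j assume j: "1 \<le> j" "j + 2 \<le> t - 1"
    show "\<not> int d dvd pos (j + 2) - pos j"
    proof
      assume "int d dvd pos (j + 2) - pos j"
      then have "walk (j + 2) = walk j" using pos[of j] pos[of "j + 2"] j d_pos by (simp add: rim_vertex_eq_iff)
      moreover have "j + 2 < t" using j by arith
      ultimately show False using walk_inj[of "j + 2" j] by simp
    qed
  qed blast
  show thesis
  proof (rule that[OF \<sigma>])
    fix j assume "1 \<le> j" "j < t"
    then show "walk j = rim_vertex (int d) (pos 1 + \<sigma> * (int j - 1))"
      using pos[of j] arc[of j] d_pos by (simp add: rim_vertex_eq_iff algebra_simps)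
  qed
qed

end


locale theta_arc_embedding = theta_embedding +
  fixes p \<sigma> :: int
  assumes sign: "\<sigma> = 1 \<or> \<sigma> = -1"
    and walk_eq: "\<And>j. 1 \<le> j \<Longrightarrow> j < t \<Longrightarrow> walk j = rim_vertex (int d) (p + \<sigma> * (int j - 1))"
begin

lemma image_verts: "f ` {1..t} = placed_verts (int d) t a p \<sigma>"
proof -
  have "f ` {1..t} = walk ` {0..<t}"
    unfolding walk_def image_image[of f "cycle_step t k", symmetric] cycle_step_image[OF k_bounds] ..
  moreover have "{0..<t} = insert 0 {1..<t}" using t_ge by auto
  moreover have "walk ` {1..<t} = (\<lambda>x. rim_vertex (int d) (p + \<sigma> * x)) ` ((\<lambda>j. int j - 1) ` {1..<t})"
    unfolding image_image by (rule image_cong) (simp_all add: walk_eq)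
  moreover have "(\<lambda>j::nat. int j - 1) ` {1..<t} = {0..int t - 2}"
    unfolding image_int_pred by auto
  ultimately show ?thesis by (simp add: placed_verts_def walk_hub)
qed

lemma image_cycle_edges:
  "(\<lambda>e. f ` e) ` {{i, i mod t + 1} | i. i \<in> {1..t}} = placed_edges (int d) t a p \<sigma> {0, int t - 2}"
proof -
  have "(\<lambda>e. f ` e) ` {{i, i mod t + 1} | i. i \<in> {1..t}} = (\<lambda>i. {f i, f (i mod t + 1)}) ` {1..t}"
    unfolding Setcompr_eq_image image_image by simp
  also have "\<dots> = (\<lambda>j. {walk j, walk (Suc j)}) ` {0..<t}"
    unfolding cycle_step_image[OF k_bounds, symmetric] image_image walk_def cycle_step_Suc ..
  also have "{0..<t} = {0, t - 1} \<union> {1..<t - 1}" using t_ge by auto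
  finally have cycle: "(\<lambda>e. f ` e) ` {{i, i mod t + 1} | i. i \<in> {1..t}}
      = (\<lambda>j. {walk j, walk (Suc j)}) ` ({0, t - 1} \<union> {1..<t - 1})" .
  have path: "(\<lambda>j. {walk j, walk (Suc j)}) ` {1..<t - 1}
      = (\<lambda>x. {rim_vertex (int d) (p + \<sigma> * x), rim_vertex (int d) (p + \<sigma> * (x + 1))}) ` {0..<int t - 2}"
  proof -
    have "(\<lambda>j. {walk j, walk (Suc j)}) ` {1..<t - 1}
        = (\<lambda>x. {rim_vertex (int d) (p + \<sigma> * x), rim_vertex (int d) (p + \<sigma> * (x + 1))}) ` ((\<lambda>j. int j - 1) ` {1..<t - 1})"
      unfolding image_image by (rule image_cong) (auto simp: walk_eq algebra_simps)
    also have "(\<lambda>j::nat. int j - 1) ` {1..<t - 1} = {0..<int t - 2}"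
      using image_int_pred[of "t - 1"] t_ge by (simp add: of_nat_diff)
    finally show ?thesis .
  qed
  have ends: "{walk 0, walk (Suc 0)} = {Inl a, rim_vertex (int d) (p + \<sigma> * 0)}"
    "{walk (t - 1), walk (Suc (t - 1))} = {Inl a, rim_vertex (int d) (p + \<sigma> * (int t - 2))}"
    using walk_hub walk_eq[of 1] walk_eq[of "t - 1"] t_ge by (auto simp: of_nat_diff)
  then have "(\<lambda>j. {walk j, walk (Suc j)}) ` {0, t - 1}
      = (\<lambda>x. {Inl a, rim_vertex (int d) (p + \<sigma> * x)}) ` {0, int t - 2}"
    by simp
  then show ?thesis
    unfolding cycle image_Un path placed_edges_def by (simp add: Un_commute)
qed

lemma chord_edge: "i \<in> I \<Longrightarrow> {f 1, f i} \<in> wheel_edges d s"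
  using edges[of "{1, i}"] unfolding theta_edges_def by auto

lemma image_chords_at_hub:
  assumes "k = 1"
  shows "(\<lambda>e. f ` e) ` {{1, i} | i. i \<in> I} = (\<lambda>x. {Inl a, rim_vertex (int d) (p + \<sigma> * x)}) ` ((\<lambda>i. int i - 2) ` I)"
  unfolding Setcompr_eq_image image_image
proof (rule image_cong)
  fix i assume "i \<in> I"
  then have i: "3 \<le> i" "i < t" using I_sub by auto
  have "f i = walk (i - 1)" unfolding walk_def cycle_step_def using assms i by simp
  also have "\<dots> = rim_vertex (int d) (p + \<sigma> * (int i - 2))" using walk_eq[of "i - 1"] i by (simp add: of_nat_diff)
  finally show "f ` {1, i} = {Inl a, rim_vertex (int d) (p + \<sigma> * (int i - 2))}" using hub assms by simp
qed simp

text \<open>A chord at a rim vertex would join two rim vertices that are not consecutive on the cycle.\<close>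

lemma chords_off_hub:
  assumes "k \<noteq> 1"
  shows "I \<subseteq> {k}"
proof
  fix i assume i: "i \<in> I"
  show "i \<in> {k}"
  proof (rule ccontr)
    assume "i \<notin> {k}"
    have "i \<in> {1..t}" using i I_sub by auto
    then obtain j where j: "j < t" "cycle_step t k j = i"
      using cycle_step_image[OF k_bounds] by (metis atLeastLessThan_iff imageE zero_le)
    define j1 where "j1 = t + 1 - k"
    have j1: "1 \<le> j1" "j1 < t" "cycle_step t k j1 = 1"
      using k_bounds assms cycle_step_back_to_1[OF k_bounds] unfolding j1_def by auto
    have "j \<noteq> 0" using j \<open>i \<notin> {k}\<close> cycle_step_0[OF k_bounds] by (cases j) auto
    then have "{rim_vertex (int d) (p + \<sigma> * (int j1 - 1)), rim_vertex (int d) (p + \<sigma> * (int j - 1))} \<in> wheel_edges d s"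
      using chord_edge[OF i] walk_eq[of j1] walk_eq[of j] j j1 by (simp add: walk_def)
    from rim_vertices_adjacent[OF this d_pos] obtain \<epsilon> where \<epsilon>: "\<epsilon> = 1 \<or> \<epsilon> = -1"
      "int d dvd (p + \<sigma> * (int j - 1)) - (p + \<sigma> * (int j1 - 1)) - \<epsilon>" .
    moreover have "(p + \<sigma> * (int j - 1)) - (p + \<sigma> * (int j1 - 1)) - \<epsilon> = \<sigma> * (int j - int j1) - \<epsilon>"
      by (simp add: algebra_simps)
    ultimately have \<epsilon>: "\<epsilon> = 1 \<or> \<epsilon> = -1" "int d dvd \<sigma> * (int j - int j1) - \<epsilon>" by simp_all
    moreover have "\<bar>\<sigma> * (int j - int j1) - \<epsilon>\<bar> < int d"
      using sign \<epsilon>(1) j j1 d_ge by auto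
    ultimately have "\<sigma> * (int j - int j1) = \<epsilon>"
      using dvd_imp_le_int[of "\<sigma> * (int j - int j1) - \<epsilon>" "int d"] by fastforce
    then have "j = Suc j1 \<or> j1 = Suc j" using sign \<epsilon>(1) by auto
    then show False
    proof
      assume "j = Suc j1"
      then have "i = 2" using j j1 t_ge by (simp add: cycle_step_Suc)
      then show False using i I_sub by auto
    next
      assume "j1 = Suc j"
      then have "i mod t = 0" using j j1 by (simp add: cycle_step_Suc)
      moreover have "3 \<le> i" "i < t" using i I_sub by auto
      ultimately show False by simp
    qed
  qed
qed

lemma image_chord_off_hub:
  assumes "k \<noteq> 1" "k \<in> I"
  shows "(\<lambda>e. f ` e) ` {{1, i} | i. i \<in> I} = {{Inl a, rim_vertex (int d) (p + \<sigma> * (int t - int k))}}"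
proof -
  have I: "I = {k}" using chords_off_hub[OF assms(1)] assms(2) by auto
  have "f 1 = walk (t + 1 - k)" using cycle_step_back_to_1[OF k_bounds] by (simp add: walk_def)
  also have "\<dots> = rim_vertex (int d) (p + \<sigma> * (int t - int k))"
    using walk_eq[of "t + 1 - k"] k_bounds assms(1) by (simp add: of_nat_diff)
  finally show ?thesis unfolding I using hub by auto
qed

lemma placement:
  obtains p' \<sigma>' where "\<sigma>' = 1 \<or> \<sigma>' = -1" "f ` {1..t} = placed_verts (int d) t a p' \<sigma>'"
    "(\<lambda>e. f ` e) ` theta_edges t I = placed_edges (int d) t a p' \<sigma>' (spoke_offsets t I)"
proof -
  have edges_eq: "(\<lambda>e. f ` e) ` theta_edges t I
      = placed_edges (int d) t a p \<sigma> {0, int t - 2} \<union> (\<lambda>e. f ` e) ` {{1, i} | i. i \<in> I}"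
    unfolding theta_edges_def image_Un image_cycle_edges ..
  consider "k = 1" | "k \<noteq> 1" "I = {}" | "k \<noteq> 1" "I = {k}"
    using chords_off_hub by blast
  then show thesis
  proof cases
    case 1
    have "placed_edges (int d) t a p \<sigma> (spoke_offsets t I) = placed_edges (int d) t a p \<sigma> {0, int t - 2}
        \<union> (\<lambda>x. {Inl a, rim_vertex (int d) (p + \<sigma> * x)}) ` ((\<lambda>i. int i - 2) ` I)"
      unfolding spoke_offsets_def by (rule placed_edges_Un)
    then show thesis
      using that[OF sign image_verts] edges_eq image_chords_at_hub[OF 1] by simp
  next
    case 2
    then show thesis
      using that[OF sign image_verts] edges_eq by (simp add: spoke_offsets_def)
  next
    case 3
    have "reflect_offsets t (spoke_offsets t I) = {0, int t - 2} \<union> {int t - int k}"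
      using 3 unfolding reflect_offsets_def spoke_offsets_def by auto
    then have "placed_edges (int d) t a p \<sigma> (reflect_offsets t (spoke_offsets t I))
        = placed_edges (int d) t a p \<sigma> {0, int t - 2} \<union> {{Inl a, rim_vertex (int d) (p + \<sigma> * (int t - int k))}}"
      by (simp only: placed_edges_Un) simp
    then have "(\<lambda>e. f ` e) ` theta_edges t I = placed_edges (int d) t a p \<sigma> (reflect_offsets t (spoke_offsets t I))"
      using edges_eq image_chord_off_hub 3 by simp
    moreover have "-\<sigma> = 1 \<or> -\<sigma> = -1" using sign by auto
    ultimately show thesis
      using that[of "-\<sigma>" "p + \<sigma> * (int t - 2)"] image_verts
      by (simp add: placed_edges_reflect placed_verts_reflect)
  qed
qed

end

context theta_embedding
begin

lemma placement:
  obtains p \<sigma> where "\<sigma> = 1 \<or> \<sigma> = -1" "f ` {1..t} = placed_verts (int d) t a p \<sigma>"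
    "(\<lambda>e. f ` e) ` theta_edges t I = placed_edges (int d) t a p \<sigma> (spoke_offsets t I)"
proof -
  obtain p \<sigma> where "\<sigma> = 1 \<or> \<sigma> = -1"
    "\<And>j. 1 \<le> j \<Longrightarrow> j < t \<Longrightarrow> walk j = rim_vertex (int d) (p + \<sigma> * (int j - 1))"
    using walk_arc by blast
  then interpret theta_arc_embedding d s t I f k a p \<sigma>
    by unfold_locales
  show thesis by (rule placement) (rule that)
qed

end

lemma graph_iso_edges_image:
  assumes iso: "\<And>x y. x \<in> V \<Longrightarrow> y \<in> V \<Longrightarrow> {x, y} \<in> E \<longleftrightarrow> {f x, f y} \<in> E'"
    and E: "\<And>e. e \<in> E \<Longrightarrow> \<exists>x\<in>V. \<exists>y\<in>V. e = {x, y}"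
    and E': "\<And>e. e \<in> E' \<Longrightarrow> \<exists>x\<in>V. \<exists>y\<in>V. e = {f x, f y}"
  shows "E' = (\<lambda>e. f ` e) ` E"
proof
  show "E' \<subseteq> (\<lambda>e. f ` e) ` E"
  proof
    fix e assume "e \<in> E'"
    with E' obtain x y where "x \<in> V" "y \<in> V" "e = {f x, f y}" by blast
    with iso \<open>e \<in> E'\<close> show "e \<in> (\<lambda>e. f ` e) ` E" by (intro image_eqI[of _ _ "{x, y}"]) auto
  qed
  show "(\<lambda>e. f ` e) ` E \<subseteq> E'"
    using iso E by fastforce
qed

lemma theta_edge_endpoints:
  assumes "I \<subseteq> {3..<t}" "e \<in> theta_edges t I"
  shows "\<exists>x\<in>{1..t}. \<exists>y\<in>{1..t}. e = {x, y}"
proof -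
  from assms(2) consider i where "i \<in> {1..t}" "e = {i, i mod t + 1}" | i where "i \<in> I" "e = {1, i}"
    unfolding theta_edges_def by blast
  then show ?thesis
  proof cases
    case 1
    moreover have "i mod t + 1 \<in> {1..t}" using 1 by (simp add: Suc_leI)
    ultimately show ?thesis by blast
  next
    case 2
    then have "1 \<in> {1..t}" "i \<in> {1..t}" using assms(1) by auto
    then show ?thesis using 2 by blast
  qed
qed

lemma theta_copy_is_placement:
  assumes t: "t \<ge> 4" and d: "d \<ge> 3 * t - 5" and I: "I \<subseteq> {3..<t}"
    and sub: "is_subgraph (wheel_verts d s) (wheel_edges d s) VH EH"
    and iso: "graph_iso (theta_verts t) (theta_edges t I) VH EH"
    and one_hub: "card (VH \<inter> wheel_hubs s) = 1"
  obtains a p \<sigma> where "a \<in> {1..s}" "\<sigma> = 1 \<or> \<sigma> = -1"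
    "VH = placed_verts (int d) t a p \<sigma>" "EH = placed_edges (int d) t a p \<sigma> (spoke_offsets t I)"
proof -
  obtain f where bij: "bij_betw f {1..t} VH"
    and f_edges: "\<And>x y. x \<in> {1..t} \<Longrightarrow> y \<in> {1..t} \<Longrightarrow> {x, y} \<in> theta_edges t I \<longleftrightarrow> {f x, f y} \<in> EH"
    using iso unfolding graph_iso_def theta_verts_def by blast
  have VH: "VH = f ` {1..t}" and inj: "inj_on f {1..t}" using bij by (auto simp: bij_betw_def)
  have EH: "EH = (\<lambda>e. f ` e) ` theta_edges t I"
  proof (rule graph_iso_edges_image[OF f_edges theta_edge_endpoints[OF I]])
    fix e assume e: "e \<in> EH"
    then have "e \<in> wheel_edges d s" "e \<subseteq> VH" using sub unfolding is_subgraph_def by auto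
    moreover obtain u w where "e = {u, w}"
      using \<open>e \<in> wheel_edges d s\<close> by (cases rule: wheel_edgeE) auto
    ultimately show "\<exists>x\<in>{1..t}. \<exists>y\<in>{1..t}. e = {f x, f y}" using VH by auto
  qed
  obtain h where h: "VH \<inter> wheel_hubs s = {h}" using one_hub by (rule card_1_singletonE)
  then have "h \<in> wheel_hubs s" by blast
  then obtain a where a: "a \<in> {1..s}" "h = Inl a" unfolding wheel_hubs_def by blast
  have "Inl a \<in> f ` {1..t}" using h a VH by blast
  then obtain k where k: "k \<in> {1..t}" "f k = Inl a" by (metis imageE)
  interpret theta_embedding d s t I f k a
  proof
    show "int t + 2 \<le> int d" using t d by linarith
    fix e assume "e \<in> theta_edges t I"
    then have "f ` e \<in> EH" unfolding EH by blast
    then show "f ` e \<in> wheel_edges d s" using sub unfolding is_subgraph_def by blast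
  next
    fix x assume x: "x \<in> {1..t}" "x \<noteq> k"
    then have "f x \<noteq> Inl a" using inj_onD[OF inj _ x(1) k(1)] k(2) by auto
    moreover have "f x \<in> VH" using x VH by blast
    ultimately have "f x \<notin> wheel_hubs s" using h a by blast
    then show "f x \<in> wheel_rim d" using x VH sub unfolding is_subgraph_def wheel_verts_def by blast
  qed (use t I inj k in auto)
  obtain p \<sigma> where "\<sigma> = 1 \<or> \<sigma> = -1" "f ` {1..t} = placed_verts (int d) t a p \<sigma>"
    "(\<lambda>e. f ` e) ` theta_edges t I = placed_edges (int d) t a p \<sigma> (spoke_offsets t I)"
    by (rule placement)
  then show thesis using that[OF a(1)] unfolding VH EH by blast
qed

definition directions :: "nat \<Rightarrow> nat set \<Rightarrow> int set" where
  "directions t I = (if theta_symmetric t I then {1} else {1, -1})"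

lemma placement_in_directions:
  assumes sg: "\<sigma> = 1 \<or> \<sigma> = -1" and I: "I \<subseteq> {3..<t}"
  obtains \<sigma>' p' where "\<sigma>' \<in> directions t I" "placed_verts n t a p \<sigma> = placed_verts n t a p' \<sigma>'"
    "placed_edges n t a p \<sigma> (spoke_offsets t I) = placed_edges n t a p' \<sigma>' (spoke_offsets t I)"
proof (cases "\<sigma> \<in> directions t I")
  case False
  then have sym: "theta_symmetric t I" and "\<sigma> = -1" using sg by (auto simp: directions_def split: if_splits)
  then have "placed_verts n t a p \<sigma> = placed_verts n t a (p - (int t - 2)) 1"
    "placed_edges n t a p \<sigma> (spoke_offsets t I) = placed_edges n t a (p - (int t - 2)) 1 (spoke_offsets t I)"
    using placed_verts_reflect[of n t a "p - (int t - 2)" 1]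
      placed_edges_reflect[of n t a "p - (int t - 2)" 1] reflect_spoke_offsets[OF sym I] by simp_all
  then show thesis using that[of 1] sym by (simp add: directions_def)
qed (use that in blast)

definition one_hub_theta_copies ::
    "nat \<Rightarrow> nat \<Rightarrow> nat \<Rightarrow> nat set \<Rightarrow> (nat + nat) set set \<Rightarrow> ((nat + nat) set \<times> (nat + nat) set set) set" where
  "one_hub_theta_copies d s t I T = {(VH, EH). is_subgraph (wheel_verts d s) (wheel_edges d s) VH EH
              \<and> graph_iso (theta_verts t) (theta_edges t I) VH EH
              \<and> card (VH \<inter> wheel_hubs s) = 1
              \<and> card (T \<inter> EH) \<ge> 2}"

definition placed_copy :: "int \<Rightarrow> nat \<Rightarrow> int set \<Rightarrow> int \<Rightarrow> nat \<times> int \<Rightarrow> (nat + nat) set \<times> (nat + nat) set set" where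
  "placed_copy n t S \<sigma> = (\<lambda>(a, p). (placed_verts n t a p \<sigma>, placed_edges n t a p \<sigma> S))"

lemma one_hub_theta_copies_subset:
  assumes t: "t \<ge> 4" and d: "d \<ge> 3 * t - 5" and I: "I \<subseteq> {3..<t}"
  shows "one_hub_theta_copies d s t I T
    \<subseteq> (\<Union>\<sigma>\<in>directions t I. placed_copy (int d) t (spoke_offsets t I) \<sigma> ` placements_meeting d s t (spoke_offsets t I) T \<sigma>)"
proof (safe)
  fix VH EH
  assume "(VH, EH) \<in> one_hub_theta_copies d s t I T"
  then have copy: "is_subgraph (wheel_verts d s) (wheel_edges d s) VH EH"
      "graph_iso (theta_verts t) (theta_edges t I) VH EH" "card (VH \<inter> wheel_hubs s) = 1"
    and two: "card (T \<inter> EH) \<ge> 2"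
    unfolding one_hub_theta_copies_def by auto
  obtain a p \<sigma> where a: "a \<in> {1..s}" and sg: "\<sigma> = 1 \<or> \<sigma> = -1"
    and VH: "VH = placed_verts (int d) t a p \<sigma>" and EH: "EH = placed_edges (int d) t a p \<sigma> (spoke_offsets t I)"
    by (rule theta_copy_is_placement[OF t d I copy])
  obtain \<sigma>' p' where \<sigma>': "\<sigma>' \<in> directions t I" and
    VH': "VH = placed_verts (int d) t a (p' mod int d) \<sigma>'" and
    EH': "EH = placed_edges (int d) t a (p' mod int d) \<sigma>' (spoke_offsets t I)"
    by (rule placement_in_directions[OF sg I]) (simp add: VH EH placed_verts_mod placed_edges_mod)
  have "(a, p' mod int d) \<in> placements_meeting d s t (spoke_offsets t I) T \<sigma>'"
    using a two d t EH' by (simp add: placements_meeting_def)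
  moreover have "(VH, EH) = placed_copy (int d) t (spoke_offsets t I) \<sigma>' (a, p' mod int d)"
    using VH' EH' by (simp add: placed_copy_def)
  ultimately show "(VH, EH) \<in> (\<Union>\<sigma>\<in>directions t I.
      placed_copy (int d) t (spoke_offsets t I) \<sigma> ` placements_meeting d s t (spoke_offsets t I) T \<sigma>)"
    using \<sigma>' by blast
qed

lemma card_one_hub_theta_copies_le:
  assumes "t \<ge> 4" "d \<ge> 3 * t - 5" "I \<subseteq> {3..<t}"
  shows "card (one_hub_theta_copies d s t I T)
    \<le> (\<Sum>\<sigma>\<in>directions t I. card (placements_meeting d s t (spoke_offsets t I) T \<sigma>))"
proof -
  let ?P = "placements_meeting d s t (spoke_offsets t I) T"
  let ?copy = "placed_copy (int d) t (spoke_offsets t I)"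
  have fin: "finite (directions t I)" by (simp add: directions_def)
  have "card (one_hub_theta_copies d s t I T) \<le> card (\<Union>\<sigma>\<in>directions t I. ?copy \<sigma> ` ?P \<sigma>)"
    using fin finite_placements_meeting
    by (intro card_mono one_hub_theta_copies_subset[OF assms]) auto
  also have "\<dots> \<le> (\<Sum>\<sigma>\<in>directions t I. card (?copy \<sigma> ` ?P \<sigma>))" by (rule card_UN_le[OF fin])
  also have "\<dots> \<le> (\<Sum>\<sigma>\<in>directions t I. card (?P \<sigma>))"
    by (intro sum_mono card_image_le finite_placements_meeting)
  finally show ?thesis .
qed

lemma sum_card_placements_meeting_le:
  assumes "s \<ge> 1" "t \<ge> 4" "d \<ge> 3 * t - 5" "I \<subseteq> {3..<t}" "T \<subseteq> wheel_edges d s" "card T = 3"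
  shows "(\<Sum>\<sigma>\<in>directions t I. card (placements_meeting d s t (spoke_offsets t I) T \<sigma>))
    \<le> (if theta_symmetric t I then max (s * (t - 2)) (t - 1) else max (2 * s * (t - 2)) (2 * (t - 1)))"
proof -
  let ?P = "placements_meeting d s t (spoke_offsets t I) T"
  have bound: "card (?P \<sigma>) \<le> max (s * (t - 2)) (t - 1)" if "\<sigma> = 1 \<or> \<sigma> = -1" for \<sigma>
    using that assms spoke_offsets_subset[of I t] by (intro card_placements_le) auto
  show ?thesis
  proof (cases "theta_symmetric t I")
    case True
    then show ?thesis using bound[of 1] by (simp add: directions_def)
  next
    case False
    then have "(\<Sum>\<sigma>\<in>directions t I. card (?P \<sigma>)) = card (?P 1) + card (?P (-1))"
      by (simp add: directions_def)
    also have "\<dots> \<le> 2 * max (s * (t - 2)) (t - 1)"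
      using bound[of 1] bound[of "-1"] by simp
    also have "\<dots> = max (2 * s * (t - 2)) (2 * (t - 1))"
      by (simp add: max_def mult.assoc)
    finally show ?thesis using False by simp
  qed
qed

theorem lemma2p2:
  fixes d s t l :: nat and I :: "nat set" and T :: "(nat + nat) set set"
  assumes "s \<ge> 1" and "d \<ge> 3 * t - 5" and "t \<ge> 4" and "t \<ge> l + 3"
    and "I \<subseteq> {3..<t}" and "card I = l"
    and "T \<subseteq> wheel_edges d s" and "card T = 3"
  shows "card {(VH, EH). is_subgraph (wheel_verts d s) (wheel_edges d s) VH EH
              \<and> graph_iso (theta_verts t) (theta_edges t I) VH EH
              \<and> card (VH \<inter> wheel_hubs s) = 1
              \<and> card (T \<inter> EH) \<ge> 2}
         \<le> (if theta_symmetric t I then max (s * (t - 2)) (t - 1)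
             else max (2 * s * (t - 2)) (2 * (t - 1)))"
proof -
  have "card (one_hub_theta_copies d s t I T)
      \<le> (\<Sum>\<sigma>\<in>directions t I. card (placements_meeting d s t (spoke_offsets t I) T \<sigma>))"
    using assms by (intro card_one_hub_theta_copies_le)
  also have "\<dots> \<le> (if theta_symmetric t I then max (s * (t - 2)) (t - 1)
                   else max (2 * s * (t - 2)) (2 * (t - 1)))"
    using assms by (intro sum_card_placements_meeting_le)
  finally show ?thesis unfolding one_hub_theta_copies_def .
qed

end
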